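(* Let $p$ be the transition density of a subordinator as described in the context, and let $q\colon\mathbb{R}\to[0,\infty]$ be measurable. Assume that for some $s<t$ and some $M<\infty$, for all $x\in\mathbb{R}$, $$\int_s^t\int_{\mathbb{R}}p(s,x,u,z)q(z)\,dz\,du\le M.$$ Then $q\in L^1_{loc}(\mathbb{R})$.
   Context: A subordinator is a nondecreasing Lévy process on $\mathbb{R}$. We assume its distribution at each time $t>0$ has a density $p_t$ with respect to Lebesgue measure, and set $p(s,x,t,y)=p_{t-s}(y-x)$ for $s<t$; $p$ is space-time homogeneous, $p(s,x,t,y)=0$ whenever $t\le s$ or $y\le x$, and $p(s,x,t,y)>0$ otherwise. *)

theory Defs
  imports "HOL-Probability.Probability"
begin

definition subordinator :: "'a measure \<Rightarrow> (real \<Rightarrow> 'a \<Rightarrow> real) \<Rightarrow> bool" where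
  "subordinator M X \<longleftrightarrow>
     prob_space M \<and>
     (\<forall>t\<ge>0. X t \<in> borel_measurable M) \<and>
     (\<forall>\<omega>\<in>space M. X 0 \<omega> = 0) \<and>
     (\<forall>\<omega>\<in>space M. \<forall>s t. 0 \<le> s \<longrightarrow> s \<le> t \<longrightarrow> X s \<omega> \<le> X t \<omega>) \<and>
     \<comment> \<open>independent increments\<close>
     (\<forall>(ts :: nat \<Rightarrow> real) n. 0 \<le> ts 0 \<longrightarrow> (\<forall>i<n. ts i < ts (Suc i)) \<longrightarrow>
        prob_space.indep_vars M (\<lambda>_. borel) (\<lambda>i \<omega>. X (ts (Suc i)) \<omega> - X (ts i) \<omega>) {..<n}) \<and>
     \<comment> \<open>stationary increments\<close>
     (\<forall>s t. 0 \<le> s \<longrightarrow> s \<le> t \<longrightarrow>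
        distr M borel (\<lambda>\<omega>. X t \<omega> - X s \<omega>) = distr M borel (X (t - s))) \<and>
     \<comment> \<open>stochastic continuity\<close>
     (\<forall>t\<ge>0. \<forall>\<epsilon>>0. ((\<lambda>u. measure M {\<omega>\<in>space M. \<bar>X u \<omega> - X t \<omega>\<bar> > \<epsilon>})
        \<longlongrightarrow> 0) (at t within {0..}))"

definition subordinator_density :: "'a measure \<Rightarrow> (real \<Rightarrow> 'a \<Rightarrow> real) \<Rightarrow> (real \<Rightarrow> real \<Rightarrow> real) \<Rightarrow> bool" where
  "subordinator_density M X pt \<longleftrightarrow>
     subordinator M X \<and>
     (\<lambda>(t, y). pt t y) \<in> borel_measurable (borel :: (real \<times> real) measure) \<and>
     (\<forall>t>0. distributed M lborel (X t) (\<lambda>y. ennreal (pt t y))) \<and>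
     (\<forall>t>0. \<forall>y. y > 0 \<longrightarrow> pt t y > 0) \<and>
     (\<forall>t>0. \<forall>y. y \<le> 0 \<longrightarrow> pt t y = 0)"

definition trans_dens :: "(real \<Rightarrow> real \<Rightarrow> real) \<Rightarrow> real \<Rightarrow> real \<Rightarrow> real \<Rightarrow> real \<Rightarrow> real" where
  "trans_dens pt s x t y = (if s < t then pt (t - s) (y - x) else 0)"

definition locally_integrable_nn :: "(real \<Rightarrow> ennreal) \<Rightarrow> bool" where
  "locally_integrable_nn q \<longleftrightarrow> (\<forall>K. compact K \<longrightarrow> (\<integral>\<^sup>+ z. q z * indicator K z \<partial>lborel) < \<infinity>)"

end

theory Submission
  imports Defs
begin

text \<open>Average the hypothesis over starting points \<open>x \<in> [a - 1, b]\<close>: by Tonelli,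
  \<open>\<integral> q(z) w(z) dz \<le> (b - a + 1) C\<close> with
  \<open>w(z) = \<integral>\<^sub>a\<^sub>-\<^sub>1\<^sup>b \<integral>\<^sub>s\<^sup>t p(s,x,u,z) du dx\<close>.
  Space homogeneity turns \<open>w(z)\<close> into \<open>\<integral> G\<close> over the window \<open>[z - b, z - a + 1] \<supseteq> [0, 1]\<close>,
  where \<open>G(y) = \<integral>\<^sub>s\<^sup>t p\<^sub>u\<^sub>-\<^sub>s(y) du > 0\<close> for \<open>y > 0\<close>; so \<open>w\<close> is bounded below on \<open>[a, b]\<close>
  by a positive constant and \<open>q\<close> is integrable there.\<close>

lemma nn_integral_lborel_pos_if_pos_on_interval:
  fixes f :: "real \<Rightarrow> ennreal"
  assumes [measurable]: "f \<in> borel_measurable borel" and "l < r"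
    and pos: "\<And>x. x \<in> {l<..<r} \<Longrightarrow> 0 < f x"
  shows "0 < (\<integral>\<^sup>+x. f x \<partial>lborel)"
proof (rule ccontr)
  assume "\<not> ?thesis"
  then have "AE x in lborel. f x = 0"
    by (simp add: nn_integral_0_iff_AE)
  then have "AE x in lborel. x \<notin> {l<..<r}"
    by eventually_elim (use pos in force)
  then have "emeasure lborel {l<..<r} = 0"
    by (subst AE_iff_measurable[symmetric]) auto
  with \<open>l < r\<close> show False by simp
qed

lemma nn_integral_indicator_finite_if_weighted_finite:
  fixes q w :: "real \<Rightarrow> ennreal"
  assumes [measurable]: "q \<in> borel_measurable borel" "K \<in> sets borel"
    and "0 < c" and weight: "\<And>z. z \<in> K \<Longrightarrow> c \<le> w z"
    and finite: "(\<integral>\<^sup>+z. q z * w z \<partial>lborel) < \<infinity>"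
  shows "(\<integral>\<^sup>+z. q z * indicator K z \<partial>lborel) < \<infinity>"
proof -
  define c' where "c' = min c 1"
  have c': "0 < c'" "c' < \<infinity>"
    using \<open>0 < c\<close> by (auto simp: c'_def min_less_iff_disj)
  have "c' * (\<integral>\<^sup>+z. q z * indicator K z \<partial>lborel) = (\<integral>\<^sup>+z. c' * (q z * indicator K z) \<partial>lborel)"
    by (simp add: nn_integral_cmult)
  also have "\<dots> \<le> (\<integral>\<^sup>+z. q z * w z \<partial>lborel)"
  proof (rule nn_integral_mono)
    fix z
    have "z \<in> K \<Longrightarrow> c' \<le> w z"
      using weight by (simp add: c'_def min.coboundedI1)
    then show "c' * (q z * indicator K z) \<le> q z * w z"
      by (cases "z \<in> K") (simp_all add: mult.commute[of c'] mult_left_mono)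
  qed
  also note finite
  finally show ?thesis
    using c' by (auto simp: ennreal_mult_less_top top_unique)
qed

lemma nn_integral_lborel_weighted_swap:
  fixes k :: "real \<Rightarrow> real \<Rightarrow> real \<Rightarrow> ennreal" and q :: "real \<Rightarrow> ennreal"
  assumes [measurable]: "(\<lambda>(x, u, z). k x u z) \<in> borel_measurable (lborel \<Otimes>\<^sub>M lborel \<Otimes>\<^sub>M lborel)"
    and [measurable]: "q \<in> borel_measurable borel" "A \<in> sets borel" "B \<in> sets borel"
  shows "(\<integral>\<^sup>+z. q z * (\<integral>\<^sup>+x. indicator A x * (\<integral>\<^sup>+u. indicator B u * k x u z \<partial>lborel) \<partial>lborel) \<partial>lborel)
       = (\<integral>\<^sup>+x. indicator A x * (\<integral>\<^sup>+u. (\<integral>\<^sup>+z. k x u z * q z \<partial>lborel) * indicator B u \<partial>lborel) \<partial>lborel)"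
proof -
  define h where "h x u z = indicator A x * (indicator B u * (k x u z * q z))" for x u z
  have [measurable]: "(\<lambda>w. k (f w) (g w) (g' w)) \<in> borel_measurable N"
    if [measurable]: "f \<in> borel_measurable N" "g \<in> borel_measurable N" "g' \<in> borel_measurable N"
    for f g g' and N :: "'b measure"
    using measurable_compose[of "\<lambda>w. (f w, g w, g' w)" N _ "\<lambda>(x, u, z). k x u z"] by simp
  have "(\<integral>\<^sup>+z. q z * (\<integral>\<^sup>+x. indicator A x * (\<integral>\<^sup>+u. indicator B u * k x u z \<partial>lborel) \<partial>lborel) \<partial>lborel)
      = (\<integral>\<^sup>+z. \<integral>\<^sup>+x. \<integral>\<^sup>+u. h x u z \<partial>lborel \<partial>lborel \<partial>lborel)"
    by (simp add: h_def nn_integral_cmult[symmetric] mult_ac)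
  also have "\<dots> = (\<integral>\<^sup>+x. \<integral>\<^sup>+z. \<integral>\<^sup>+u. h x u z \<partial>lborel \<partial>lborel \<partial>lborel)"
    unfolding h_def by (rule lborel_pair.Fubini') measurable
  also have "\<dots> = (\<integral>\<^sup>+x. \<integral>\<^sup>+u. \<integral>\<^sup>+z. h x u z \<partial>lborel \<partial>lborel \<partial>lborel)"
    unfolding h_def by (intro nn_integral_cong lborel_pair.Fubini') measurable
  also have "\<dots> = (\<integral>\<^sup>+x. indicator A x * (\<integral>\<^sup>+u. (\<integral>\<^sup>+z. k x u z * q z \<partial>lborel) * indicator B u \<partial>lborel) \<partial>lborel)"
    by (simp add: h_def nn_integral_cmult mult.commute)
  finally show ?thesis .
qed

lemma measurable_trans_dens:
  assumes "(\<lambda>(t, y). pt t y) \<in> borel_measurable borel"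
    and [measurable]: "f \<in> borel_measurable N" "g \<in> borel_measurable N" "h \<in> borel_measurable N"
  shows "(\<lambda>w. trans_dens pt s (f w) (g w) (h w)) \<in> borel_measurable N"
proof -
  have "(\<lambda>w. pt (g w - s) (h w - f w)) \<in> borel_measurable N"
    using measurable_compose[OF _ assms(1), of "\<lambda>w. (g w - s, h w - f w)"] by simp
  then show ?thesis
    unfolding trans_dens_def by measurable
qed

lemma trans_dens_translate: "trans_dens pt s x u z = trans_dens pt s 0 u (z - x)"
  by (simp add: trans_dens_def)

lemma occupation_integral_lower_bound:
  assumes [measurable]: "(\<lambda>(t, y). pt t y) \<in> borel_measurable borel"
    and pos: "\<And>r y. 0 < r \<Longrightarrow> 0 < y \<Longrightarrow> 0 < pt r y" and "s < t"
  obtains c :: ennreal where "0 < c"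
    and "\<And>z. z \<in> {a..b} \<Longrightarrow>
      c \<le> (\<integral>\<^sup>+x. indicator {a - 1..b} x *
              (\<integral>\<^sup>+u. indicator {s..t} u * ennreal (trans_dens pt s x u z) \<partial>lborel) \<partial>lborel)"
proof
  note [measurable] = measurable_trans_dens[OF assms(1)]
  define G where "G y = (\<integral>\<^sup>+u. indicator {s..t} u * ennreal (trans_dens pt s 0 u y) \<partial>lborel)" for y
  have [measurable]: "G \<in> borel_measurable borel"
    unfolding G_def by measurable
  have G_pos: "0 < G y" if "0 < y" for y
    unfolding G_def using \<open>s < t\<close> that pos[of "_ - s" y]
    by (intro nn_integral_lborel_pos_if_pos_on_interval[where l=s and r=t])
      (measurable, auto simp: trans_dens_def)
  show "0 < (\<integral>\<^sup>+y. indicator {0..1} y * G y \<partial>lborel)"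
    using G_pos by (intro nn_integral_lborel_pos_if_pos_on_interval[where l=0 and r=1]) auto
  fix z assume z: "z \<in> {a..b}"
  have "(\<integral>\<^sup>+y. indicator {0..1} y * G y \<partial>lborel) \<le> (\<integral>\<^sup>+y. indicator {a - 1..b} (z - y) * G y \<partial>lborel)"
    using z by (intro nn_integral_mono) (auto simp: indicator_def)
  also have "\<dots> = (\<integral>\<^sup>+x. indicator {a - 1..b} x *
              (\<integral>\<^sup>+u. indicator {s..t} u * ennreal (trans_dens pt s x u z) \<partial>lborel) \<partial>lborel)"
    using nn_integral_real_affine[of "\<lambda>x. indicator {a - 1..b} x * G (z - x)" "-1" z]
    by (simp add: G_def trans_dens_translate[of pt s _ _ z])
  finally show "(\<integral>\<^sup>+y. indicator {0..1} y * G y \<partial>lborel) \<le> \<dots>" .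
qed

theorem lemma3p2:
  fixes M :: "'a measure" and X :: "real \<Rightarrow> 'a \<Rightarrow> real" and pt :: "real \<Rightarrow> real \<Rightarrow> real"
    and q :: "real \<Rightarrow> ennreal" and s t :: real and C :: ennreal
  assumes "subordinator_density M X pt"
    and "q \<in> borel_measurable borel"
    and "s < t" and "C < \<infinity>"
    and "\<forall>x. (\<integral>\<^sup>+ u. (\<integral>\<^sup>+ z. ennreal (trans_dens pt s x u z) * q z \<partial>lborel)
                  * indicator {s..t} u \<partial>lborel) \<le> C"
  shows "locally_integrable_nn q"
  unfolding locally_integrable_nn_def
proof (intro allI impI)
  fix K :: "real set" assume "compact K"
  have pt_meas: "(\<lambda>(t, y). pt t y) \<in> borel_measurable borel"
    and pt_pos: "\<And>r y. 0 < r \<Longrightarrow> 0 < y \<Longrightarrow> 0 < pt r y"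
    using assms(1) unfolding subordinator_density_def by blast+
  note [measurable] = measurable_trans_dens[OF pt_meas] assms(2)
  obtain a b where "K \<subseteq> {a..b}"
    using compact_imp_bounded[OF \<open>compact K\<close>] bounded_subset_cbox_symmetric
    by (metis cbox_interval)
  obtain c where "0 < c" and c: "\<And>z. z \<in> {a..b} \<Longrightarrow>
      c \<le> (\<integral>\<^sup>+x. indicator {a - 1..b} x *
              (\<integral>\<^sup>+u. indicator {s..t} u * ennreal (trans_dens pt s x u z) \<partial>lborel) \<partial>lborel)"
    using occupation_integral_lower_bound[OF pt_meas pt_pos \<open>s < t\<close>] by blast
  have "(\<integral>\<^sup>+z. q z * (\<integral>\<^sup>+x. indicator {a - 1..b} x *
              (\<integral>\<^sup>+u. indicator {s..t} u * ennreal (trans_dens pt s x u z) \<partial>lborel) \<partial>lborel) \<partial>lborel)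
      = (\<integral>\<^sup>+x. indicator {a - 1..b} x * (\<integral>\<^sup>+u. (\<integral>\<^sup>+z. ennreal (trans_dens pt s x u z) * q z \<partial>lborel)
              * indicator {s..t} u \<partial>lborel) \<partial>lborel)"
    by (rule nn_integral_lborel_weighted_swap) measurable
  also have "\<dots> \<le> (\<integral>\<^sup>+x. indicator {a - 1..b} x * C \<partial>lborel)"
    using assms(5) by (intro nn_integral_mono mult_left_mono) auto
  also have "\<dots> < \<infinity>"
    using \<open>C < \<infinity>\<close> by (simp add: nn_integral_multc ennreal_mult_less_top emeasure_lborel_Icc_eq)
  finally show "(\<integral>\<^sup>+z. q z * indicator K z \<partial>lborel) < \<infinity>"
    using \<open>K \<subseteq> {a..b}\<close> c borel_compact[OF \<open>compact K\<close>]
    by (intro nn_integral_indicator_finite_if_weighted_finite[OF assms(2) _ \<open>0 < c\<close>]) auto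
qed

end
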